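(* For an ordered triple $(p,q,r)$ of integers the following are equivalent: (1) $r\ge\min(p-1,q)$, with equality holding unless $p=q$; (2) $q\ge\min(p,r)$, with equality holding unless $p=r+1$; (3) $p\ge\min(q,r+1)$, with equality holding unless $q=r$; (4) all three inequalities $p\ge\min(q,r+1)$, $q\ge\min(p,r)$, $r\ge\min(p-1,q)$ hold. *)

theory Defs
  imports Main
begin

end

theory Submission
  imports Defs
begin

definition min_balanced :: "int \<Rightarrow> int \<Rightarrow> int \<Rightarrow> bool" where
  "min_balanced p q r \<longleftrightarrow> p \<ge> min q (r + 1) \<and> q \<ge> min p r \<and> r \<ge> min (p - 1) q"

lemma min_balanced_iff_third:
  fixes p q r :: int
  shows "min_balanced p q r \<longleftrightarrow> r \<ge> min (p - 1) q \<and> (p \<noteq> q \<longrightarrow> r = min (p - 1) q)"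
  unfolding min_balanced_def by (cases "p \<le> q"; cases "r \<le> q"; simp add: min_def; linarith)

lemma min_balanced_iff_second:
  fixes p q r :: int
  shows "min_balanced p q r \<longleftrightarrow> q \<ge> min p r \<and> (p \<noteq> r + 1 \<longrightarrow> q = min p r)"
  unfolding min_balanced_def by (cases "p \<le> r"; cases "q \<le> r"; simp add: min_def; linarith)

lemma min_balanced_iff_first:
  fixes p q r :: int
  shows "min_balanced p q r \<longleftrightarrow> p \<ge> min q (r + 1) \<and> (q \<noteq> r \<longrightarrow> p = min q (r + 1))"
  unfolding min_balanced_def by (cases "q \<le> r"; cases "p \<le> q"; simp add: min_def; linarith)

theorem proposition5p4:
  fixes p q r :: int
  defines "C1 \<equiv> r \<ge> min (p - 1) q \<and> (p \<noteq> q \<longrightarrow> r = min (p - 1) q)"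
      and "C2 \<equiv> q \<ge> min p r \<and> (p \<noteq> r + 1 \<longrightarrow> q = min p r)"
      and "C3 \<equiv> p \<ge> min q (r + 1) \<and> (q \<noteq> r \<longrightarrow> p = min q (r + 1))"
      and "C4 \<equiv> p \<ge> min q (r + 1) \<and> q \<ge> min p r \<and> r \<ge> min (p - 1) q"
  shows "(C1 \<longleftrightarrow> C2) \<and> (C2 \<longleftrightarrow> C3) \<and> (C3 \<longleftrightarrow> C4)"
proof -
  have "C4 = min_balanced p q r"
    unfolding C4_def min_balanced_def ..
  moreover have "C1 = min_balanced p q r"
    unfolding C1_def by (rule min_balanced_iff_third[symmetric])
  moreover have "C2 = min_balanced p q r"
    unfolding C2_def by (rule min_balanced_iff_second[symmetric])
  moreover have "C3 = min_balanced p q r"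
    unfolding C3_def by (rule min_balanced_iff_first[symmetric])
  ultimately show ?thesis
    by simp
qed

end
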